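(* Let $f(z)=z+a_2z^2+a_3z^3+\cdots$ belong to the class $\mathcal{U}$. Then $$|a_2a_4-a_3^2|\le 1\quad\text{and}\quad \left|a_3(a_2a_4-a_3^2)-a_4(a_4-a_2a_3)+a_5(a_3-a_2^2)\right|\le \frac14,$$ and both estimates are sharp.
   Context: Let $\mathbb{D}=\{z\in\mathbb{C}:|z|<1\}$ and let $\mathcal{A}$ be the family of functions $f$ analytic in $\mathbb{D}$ with $f(0)=0$, $f'(0)=1$. The class $\mathcal{U}$ consists of all $f\in\mathcal{A}$ such that $\left|\left[\frac{z}{f(z)}\right]^2 f'(z)-1\right|<1$ for all $z\in\mathbb{D}$. The quantities $a_2a_4-a_3^2$ and $a_3(a_2a_4-a_3^2)-a_4(a_4-a_2a_3)+a_5(a_3-a_2^2)$ are the second Hankel determinant $H_2(2)$ and the third Hankel determinant $H_3(1)$ of $f$, respectively. *)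

theory Defs
  imports "HOL-Analysis.Analysis"
begin

definition class_A :: "(complex \<Rightarrow> complex) set" where
  "class_A = {f. f holomorphic_on ball 0 1 \<and> f 0 = 0 \<and> deriv f 0 = 1}"

text \<open>The expression z/f(z) is understood (as in the paper) as the
  nonvanishing analytic function with value 1 at 0; the condition at z = 0 is
  automatic (the left side equals 0 there), so it is imposed for z \<noteq> 0, where
  f(z) \<noteq> 0 is required for the expression to make sense.\<close>
definition class_U :: "(complex \<Rightarrow> complex) set" where
  "class_U = {f \<in> class_A. \<forall>z \<in> ball 0 1 - {0}.
      f z \<noteq> 0 \<and> cmod ((z / f z)^2 * deriv f z - 1) < 1}"

definition coeff :: "(complex \<Rightarrow> complex) \<Rightarrow> nat \<Rightarrow> complex" where
  "coeff f n = (deriv ^^ n) f 0 / of_nat (fact n)"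

definition H22 :: "(complex \<Rightarrow> complex) \<Rightarrow> complex" where
  "H22 f = coeff f 2 * coeff f 4 - (coeff f 3)^2"

definition H31 :: "(complex \<Rightarrow> complex) \<Rightarrow> complex" where
  "H31 f = coeff f 3 * (coeff f 2 * coeff f 4 - (coeff f 3)^2)
         - coeff f 4 * (coeff f 4 - coeff f 2 * coeff f 3)
         + coeff f 5 * (coeff f 3 - (coeff f 2)^2)"

end

theory Submission
  imports Defs "HOL-Complex_Analysis.Complex_Analysis"
begin

text \<open>
  Write \<open>z / f(z) = 1 + z p(z)\<close>. The condition defining U becomes \<open>|z\<^sup>2 p'(z)| < 1\<close>, so by
  the Schwarz lemma \<open>p'\<close> is a Schur function (holomorphic with \<open>|p'| \<le> 1\<close> on the disc). The
  Hankel determinants of f are the shifted ones of p; in terms of the Taylor coefficients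
  \<open>d\<^sub>k\<close> of \<open>p'\<close> they read \<open>H\<^sub>2(2) = p(0) d\<^sub>1 / 2 - d\<^sub>0\<^sup>2\<close> and
  \<open>H\<^sub>3(1) = (4 d\<^sub>0 d\<^sub>2 - 3 d\<^sub>1\<^sup>2) / 12\<close>. One step of the Schur algorithm gives
  \<open>|d\<^sub>1| \<le> 1 - |d\<^sub>0|\<^sup>2\<close> and \<open>|4 d\<^sub>0 d\<^sub>2 - 3 d\<^sub>1\<^sup>2| \<le> 3\<close>, and since
  \<open>1 + z p(z)\<close> has no zeros, \<open>|p(0)| \<le> 2\<close>. Equality holds for \<open>p(z) = z\<close> and
  \<open>p(z) = z\<^sup>2 / 2\<close>.
\<close>

lemma coeff_eq_fps_nth: "f has_fps_expansion F \<Longrightarrow> Defs.coeff f n = fps_nth F n"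
  by (simp add: Defs.coeff_def fps_nth_fps_expansion)

lemma has_fps_expansion_unique_on:
  fixes f g :: "complex \<Rightarrow> complex"
  assumes "f has_fps_expansion F" "g has_fps_expansion G"
    and "open S" "0 \<in> S" "\<And>z. z \<in> S \<Longrightarrow> f z = g z"
  shows "F = G"
proof -
  have "eventually (\<lambda>z. f z = g z) (nhds 0)"
    using assms(3-5) eventually_nhds by blast
  then have "f has_fps_expansion G"
    using has_fps_expansion_cong assms(2) by blast
  with assms(1) show ?thesis
    by (rule fps_expansion_unique_complex)
qed

lemma fps_nth_fps_expansion_0 [simp]: "fps_nth (fps_expansion f 0) 0 = f 0"
  by (simp add: fps_expansion_def)

lemma fps_Hankel_X_divide:
  fixes F G :: "complex fps"
  assumes FG: "F * G = fps_X" and G0: "fps_nth G 0 = 1"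
  shows "fps_nth F 2 * fps_nth F 4 - (fps_nth F 3)^2 = fps_nth G 1 * fps_nth G 3 - (fps_nth G 2)^2"
    and "fps_nth F 3 * (fps_nth F 2 * fps_nth F 4 - (fps_nth F 3)^2)
           - fps_nth F 4 * (fps_nth F 4 - fps_nth F 2 * fps_nth F 3)
           + fps_nth F 5 * (fps_nth F 3 - (fps_nth F 2)^2)
         = fps_nth G 2 * fps_nth G 4 - (fps_nth G 3)^2"
proof -
  define a where "a = fps_nth F"
  define b where "b = fps_nth G"
  have e: "fps_nth (F * G) n = fps_nth fps_X n" for n
    using FG by simp
  have a0: "a 0 = 0" using e[of 0] G0 by (simp add: a_def b_def fps_mult_nth)
  have a1: "a 1 = 1" using e[of 1] G0 a0 by (simp add: a_def b_def fps_mult_nth)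
  have "fps_nth (F * G) n = (\<Sum>i\<le>n. a i * b (n - i))" for n
    by (simp add: a_def b_def fps_mult_nth atLeast0AtMost)
  then have e2: "a 2 + b 1 = 0"
    and e3: "a 3 + a 2 * b 1 + b 2 = 0"
    and e4: "a 4 + a 3 * b 1 + a 2 * b 2 + b 3 = 0"
    and e5: "a 5 + a 4 * b 1 + a 3 * b 2 + a 2 * b 3 + b 4 = 0"
    using e[of 2] e[of 3] e[of 4] e[of 5] G0 a0 a1
    by (simp_all add: eval_nat_numeral b_def algebra_simps)
  have a2: "a 2 = - b 1" using e2 by algebra
  have a3: "a 3 = b 1^2 - b 2" using e3 a2 by algebra
  have a4: "a 4 = 2 * b 1 * b 2 - b 1^3 - b 3" using e4 a2 a3 by algebra
  have a5: "a 5 = b 1^4 - 3 * b 1^2 * b 2 + b 2^2 + 2 * b 1 * b 3 - b 4"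
    using e5 a2 a3 a4 by algebra
  have "a 2 * a 4 - (a 3)^2 = b 1 * b 3 - (b 2)^2"
    "a 3 * (a 2 * a 4 - (a 3)^2) - a 4 * (a 4 - a 2 * a 3) + a 5 * (a 3 - (a 2)^2)
       = b 2 * b 4 - (b 3)^2"
    unfolding a2 a3 a4 a5 by algebra+
  then show "fps_nth F 2 * fps_nth F 4 - (fps_nth F 3)^2 = fps_nth G 1 * fps_nth G 3 - (fps_nth G 2)^2"
    "fps_nth F 3 * (fps_nth F 2 * fps_nth F 4 - (fps_nth F 3)^2)
       - fps_nth F 4 * (fps_nth F 4 - fps_nth F 2 * fps_nth F 3)
       + fps_nth F 5 * (fps_nth F 3 - (fps_nth F 2)^2)
     = fps_nth G 2 * fps_nth G 4 - (fps_nth G 3)^2"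
    unfolding a_def b_def .
qed

definition schur_class :: "(complex \<Rightarrow> complex) set" where
  "schur_class = {\<omega>. \<omega> holomorphic_on ball 0 1 \<and> (\<forall>z \<in> ball 0 1. norm (\<omega> z) \<le> 1)}"

lemma schur_classD:
  assumes "\<omega> \<in> schur_class"
  shows "\<omega> holomorphic_on ball 0 1" and "z \<in> ball 0 1 \<Longrightarrow> norm (\<omega> z) \<le> 1"
  using assms by (auto simp: schur_class_def)

lemma schur_class_norm_0: "\<omega> \<in> schur_class \<Longrightarrow> norm (\<omega> 0) \<le> 1"
  by (simp add: schur_classD)

lemma schur_class_constant_if_norm_eq_1:
  assumes "\<omega> \<in> schur_class" "z0 \<in> ball 0 1" "norm (\<omega> z0) = 1" "z \<in> ball 0 1"
  shows "\<omega> z = \<omega> z0"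
proof -
  have "\<omega> constant_on ball 0 1"
  proof (rule maximum_modulus_principle[of \<omega> "ball 0 1" "ball 0 1" z0])
    show "\<omega> holomorphic_on ball 0 1"
      using assms(1) by (rule schur_classD)
    show "norm (\<omega> w) \<le> norm (\<omega> z0)" if "w \<in> ball 0 1" for w
      using schur_classD(2)[OF assms(1) that] assms(3) by simp
  qed (use assms(2) in auto)
  then obtain c where "\<And>w. w \<in> ball 0 1 \<Longrightarrow> \<omega> w = c"
    by (auto simp: constant_on_def)
  with assms(2,4) show ?thesis
    by simp
qed

lemma fps_expansion_schur_class_if_norm_eq_1:
  assumes "\<omega> \<in> schur_class" "norm (\<omega> 0) = 1"
  shows "fps_expansion \<omega> 0 = fps_const (\<omega> 0)"
proof (rule has_fps_expansion_unique_on)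
  show "\<omega> has_fps_expansion fps_expansion \<omega> 0"
    using schur_classD(1)[OF assms(1)] by (intro has_fps_expansion_fps_expansion) auto
  show "\<omega> z = \<omega> 0" if "z \<in> ball 0 1" for z
    using schur_class_constant_if_norm_eq_1[OF assms(1) _ assms(2) that] by simp
qed auto

lemma schur_class_Schwarz:
  assumes "\<omega> \<in> schur_class" "\<omega> 0 = 0"
  shows "z \<in> ball 0 1 \<Longrightarrow> norm (\<omega> z) \<le> norm z" and "norm (deriv \<omega> 0) \<le> 1"
proof -
  have "norm (\<omega> z) < 1" if "norm z < 1" for z
  proof (rule ccontr)
    assume "\<not> norm (\<omega> z) < 1"
    with schur_classD(2)[OF assms(1)] that have "norm (\<omega> z) = 1"
      by fastforce
    with schur_class_constant_if_norm_eq_1[OF assms(1), of z 0] that assms(2) show False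
      by simp
  qed
  note Schwarz = Schwarz_Lemma[OF schur_classD(1)[OF assms(1)] assms(2) this]
  show "norm (\<omega> z) \<le> norm z" if "z \<in> ball 0 1"
    using Schwarz(1) that by simp
  show "norm (deriv \<omega> 0) \<le> 1"
    using Schwarz(2)[of 0] by simp
qed

lemma schur_class_factor:
  assumes "\<omega> \<in> schur_class" "\<omega> 0 = 0"
  obtains \<psi> where "\<psi> \<in> schur_class" "\<And>z. z \<in> ball 0 1 \<Longrightarrow> \<omega> z = z * \<psi> z"
proof -
  obtain \<psi> where hol: "\<psi> holomorphic_on ball 0 1" and eq: "\<And>z. norm z < 1 \<Longrightarrow> \<omega> z = z * \<psi> z"
      and d0: "deriv \<omega> 0 = \<psi> 0"
    using Schwarz3[OF schur_classD(1)[OF assms(1)] assms(2)] by blast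
  have "norm (\<psi> z) \<le> 1" if "z \<in> ball 0 1" for z
  proof (cases "z = 0")
    case True
    then show ?thesis using schur_class_Schwarz(2)[OF assms] d0 by simp
  next
    case False
    have "norm z * norm (\<psi> z) \<le> norm z"
      using schur_class_Schwarz(1)[OF assms, of z] eq[of z] that by (simp add: norm_mult)
    with False show ?thesis by simp
  qed
  with hol eq show ?thesis
    by (intro that) (auto simp: schur_class_def)
qed

lemma schur_class_if_norm_square_mult_lt_1:
  assumes hol: "\<phi> holomorphic_on ball 0 1"
    and bound: "\<And>z. z \<in> ball 0 1 \<Longrightarrow> z \<noteq> 0 \<Longrightarrow> norm (z^2 * \<phi> z) < 1"
  shows "\<phi> \<in> schur_class"
proof -
  have "norm (z * (z * \<phi> z)) \<le> 1" if "z \<in> ball 0 1" for z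
  proof (cases "z = 0")
    case False
    with bound[OF that] show ?thesis
      by (simp add: power2_eq_square mult.assoc)
  qed simp
  then have square: "(\<lambda>z. z * (z * \<phi> z)) \<in> schur_class"
    using hol unfolding schur_class_def by (auto intro!: holomorphic_intros)
  have "norm (z * \<phi> z) \<le> 1" if "z \<in> ball 0 1" for z
  proof (cases "z = 0")
    case False
    have "norm z * norm (z * \<phi> z) \<le> norm z * 1"
      using schur_class_Schwarz(1)[OF square _ that] by (simp add: norm_mult)
    with False show ?thesis
      by (metis mult_le_cancel_left_pos zero_less_norm_iff)
  qed simp
  then have linear: "(\<lambda>z. z * \<phi> z) \<in> schur_class"
    using hol unfolding schur_class_def by (auto intro!: holomorphic_intros)
  have "deriv (\<lambda>z. z * \<phi> z) 0 = \<phi> 0"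
    using holomorphic_derivI[OF hol open_ball, of 0]
    by (intro DERIV_imp_deriv) (auto intro!: derivative_eq_intros)
  then have "norm (\<phi> 0) \<le> 1"
    using schur_class_Schwarz(2)[OF linear] by simp
  moreover have "norm (\<phi> z) \<le> 1" if "z \<in> ball 0 1" "z \<noteq> 0" for z
  proof -
    have "norm z * norm (\<phi> z) \<le> norm z * 1"
      using schur_class_Schwarz(1)[OF linear _ that(1)] by (simp add: norm_mult)
    with that(2) show ?thesis
      by (metis mult_le_cancel_left_pos zero_less_norm_iff)
  qed
  ultimately show ?thesis
    using hol unfolding schur_class_def by fastforce
qed

lemma schur_class_Schur_transform:
  assumes "\<omega> \<in> schur_class" "norm (\<omega> 0) < 1"
  obtains \<omega>1 where "\<omega>1 \<in> schur_class"
    and "fps_nth (fps_expansion \<omega> 0) 1 = of_real (1 - (norm (\<omega> 0))^2) * \<omega>1 0"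
    and "fps_nth (fps_expansion \<omega> 0) 2
           = of_real (1 - (norm (\<omega> 0))^2) * fps_nth (fps_expansion \<omega>1 0) 1
             - cnj (\<omega> 0) * fps_nth (fps_expansion \<omega> 0) 1 * \<omega>1 0"
proof -
  define c where "c = \<omega> 0"
  have hol: "\<omega> holomorphic_on ball 0 1"
    using assms(1) by (rule schur_classD)
  have strict: "norm (\<omega> z) < 1" if "z \<in> ball 0 1" for z
  proof (rule ccontr)
    assume "\<not> norm (\<omega> z) < 1"
    then have "norm (\<omega> z) = 1"
      using schur_classD(2)[OF assms(1) that] by simp
    then have "\<omega> 0 = \<omega> z"
      using schur_class_constant_if_norm_eq_1[OF assms(1) that, of 0] by simp
    with assms(2) \<open>norm (\<omega> z) = 1\<close> show False
      by simp
  qed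
  have den: "1 - cnj c * \<omega> z \<noteq> 0" if "z \<in> ball 0 1" for z
  proof
    assume "1 - cnj c * \<omega> z = 0"
    then have "norm c * norm (\<omega> z) = 1"
      by (metis complex_mod_cnj norm_mult norm_one right_minus_eq)
    moreover have "norm c * norm (\<omega> z) \<le> norm (\<omega> z)"
      using assms(2) by (intro mult_left_le_one_le) (auto simp: c_def)
    ultimately show False
      using strict[OF that] by simp
  qed
  define \<psi> where "\<psi> z = (\<omega> z - c) / (1 - cnj c * \<omega> z)" for z
  have "\<psi> \<in> schur_class"
    unfolding schur_class_def
  proof (intro CollectI conjI ballI)
    show "\<psi> holomorphic_on ball 0 1"
      unfolding \<psi>_def using den by (intro holomorphic_intros hol) auto
    show "norm (\<psi> z) \<le> 1" if "z \<in> ball 0 1" for z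
      using Moebius_function_norm_lt_1[of c "\<omega> z" 0] assms(2) strict[OF that]
      unfolding \<psi>_def Moebius_function_simple c_def by simp
  qed
  moreover have "\<psi> 0 = 0"
    by (simp add: \<psi>_def c_def)
  ultimately obtain \<omega>1 where \<omega>1: "\<omega>1 \<in> schur_class" and eq: "\<And>z. z \<in> ball 0 1 \<Longrightarrow> \<psi> z = z * \<omega>1 z"
    by (rule schur_class_factor) blast
  define W where "W = fps_expansion \<omega> 0"
  define P where "P = fps_expansion \<omega>1 0"
  have hW: "\<omega> has_fps_expansion W"
    unfolding W_def using hol by (intro has_fps_expansion_fps_expansion) auto
  have hP: "\<omega>1 has_fps_expansion P"
    unfolding P_def using schur_classD(1)[OF \<omega>1] by (intro has_fps_expansion_fps_expansion) auto
  have E: "fps_X * (P * (1 - fps_const (cnj c) * W)) = W - fps_const c"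
  proof (rule has_fps_expansion_unique_on)
    show "(\<lambda>z. z * (\<omega>1 z * (1 - cnj c * \<omega> z)))
        has_fps_expansion fps_X * (P * (1 - fps_const (cnj c) * W))"
      by (intro has_fps_expansion_mult has_fps_expansion_diff has_fps_expansion_cmult_left hW hP
          has_fps_expansion_fps_X has_fps_expansion_1)
    show "(\<lambda>z. \<omega> z - c) has_fps_expansion W - fps_const c"
      by (intro has_fps_expansion_diff hW has_fps_expansion_const)
    show "z * (\<omega>1 z * (1 - cnj c * \<omega> z)) = \<omega> z - c" if "z \<in> ball 0 1" for z
    proof -
      have "z * \<omega>1 z = (\<omega> z - c) / (1 - cnj c * \<omega> z)"
        using eq[OF that] by (simp add: \<psi>_def)
      with den[OF that] show ?thesis
        by (simp add: mult.assoc[symmetric])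
    qed
  qed auto
  have "fps_nth (P * (1 - fps_const (cnj c) * W)) 0 = fps_nth W 1"
    and "fps_nth (P * (1 - fps_const (cnj c) * W)) 1 = fps_nth W 2"
    using arg_cong[OF E, of "\<lambda>F. fps_nth F 1"] arg_cong[OF E, of "\<lambda>F. fps_nth F 2"] by simp_all
  moreover have "fps_nth W 0 = c" and "fps_nth P 0 = \<omega>1 0"
    by (simp_all add: W_def P_def c_def)
  moreover have "1 - cnj c * c = of_real (1 - (norm c)^2)"
    using complex_norm_square[of c] by (simp add: mult.commute)
  ultimately show ?thesis
    by (intro that[OF \<omega>1]) (simp_all add: W_def P_def c_def fps_mult_nth_1 algebra_simps)
qed

lemma schur_class_coeff_1_bound:
  assumes "\<omega> \<in> schur_class"
  shows "norm (fps_nth (fps_expansion \<omega> 0) 1) \<le> 1 - (norm (\<omega> 0))^2"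
proof (cases "norm (\<omega> 0) = 1")
  case True
  then show ?thesis
    using fps_expansion_schur_class_if_norm_eq_1[OF assms] by simp
next
  case False
  then have "norm (\<omega> 0) < 1"
    using schur_class_norm_0[OF assms] by simp
  then obtain \<omega>1 where "\<omega>1 \<in> schur_class"
    and W1: "fps_nth (fps_expansion \<omega> 0) 1 = of_real (1 - (norm (\<omega> 0))^2) * \<omega>1 0"
    using assms by (auto elim: schur_class_Schur_transform)
  then have "norm (\<omega>1 0) \<le> 1"
    using schur_classD(2) by simp
  moreover have "0 \<le> 1 - (norm (\<omega> 0))^2"
    using \<open>norm (\<omega> 0) < 1\<close> by (simp add: power_le_one)
  ultimately show ?thesis
    unfolding W1 norm_mult norm_of_real by (simp add: mult_left_le)
qed

lemma Carlson_polynomial_bound: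
  fixes x v :: real
  assumes "0 \<le> x" "x \<le> 1" "v \<le> 1"
  shows "(1 - x^2) * (4 * x * (1 - v) + (3 + x^2) * v) \<le> 3"
proof -
  have "(1 - x^2) * (4 * x * (1 - v) + (3 + x^2) * v) = (1 - x^2) * (4 * x + v * ((1 - x) * (3 - x)))"
    by algebra
  also have "\<dots> \<le> (1 - x^2) * (4 * x + 1 * ((1 - x) * (3 - x)))"
    using assms by (intro mult_left_mono add_left_mono mult_right_mono) (auto simp: power_le_one)
  also have "\<dots> = 3 - 2 * x^2 - x^4"
    by algebra
  also have "\<dots> \<le> 3"
    using zero_le_power2[of x] zero_le_power[OF assms(1), of 4] by linarith
  finally show ?thesis .
qed

lemma schur_class_coeff_2_bound:
  assumes "\<omega> \<in> schur_class"
  shows "norm (4 * \<omega> 0 * fps_nth (fps_expansion \<omega> 0) 2 - 3 * (fps_nth (fps_expansion \<omega> 0) 1)^2) \<le> 3"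
proof (cases "norm (\<omega> 0) = 1")
  case True
  then show ?thesis
    using fps_expansion_schur_class_if_norm_eq_1[OF assms] by simp
next
  case False
  define c x where "c = \<omega> 0" and "x = norm (\<omega> 0)"
  have x: "0 \<le> x" "x < 1"
    using False schur_class_norm_0[OF assms] by (auto simp: c_def x_def)
  then obtain \<omega>1 where \<omega>1: "\<omega>1 \<in> schur_class"
    and W1: "fps_nth (fps_expansion \<omega> 0) 1 = of_real (1 - x^2) * \<omega>1 0"
    and W2: "fps_nth (fps_expansion \<omega> 0) 2
               = of_real (1 - x^2) * fps_nth (fps_expansion \<omega>1 0) 1
                 - cnj c * fps_nth (fps_expansion \<omega> 0) 1 * \<omega>1 0"
    using assms unfolding c_def x_def by (auto elim: schur_class_Schur_transform)
  define s p1 p2 where "s = 1 - x^2" and "p1 = \<omega>1 0" and "p2 = fps_nth (fps_expansion \<omega>1 0) 1"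
  have s: "0 \<le> s"
    using x by (simp add: s_def power_le_one)
  have p2: "norm p2 \<le> 1 - (norm p1)^2"
    unfolding p1_def p2_def by (rule schur_class_coeff_1_bound[OF \<omega>1])
  have p1: "norm p1 \<le> 1"
    unfolding p1_def using schur_class_norm_0[OF \<omega>1] .
  have "c * cnj c = of_real (x^2)"
    using complex_norm_square[of c] by (simp add: c_def x_def)
  then have "4 * c * fps_nth (fps_expansion \<omega> 0) 2 - 3 * (fps_nth (fps_expansion \<omega> 0) 1)^2
      = of_real s * (4 * c * p2 - of_real (3 + x^2) * p1^2)"
    unfolding W2 W1 s_def p1_def p2_def
    by (simp only: of_real_diff of_real_add of_real_power of_real_1 of_real_numeral) algebra
  also have "norm \<dots> = s * norm (4 * c * p2 - of_real (3 + x^2) * p1^2)"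
    using s by (simp add: norm_mult)
  also have "\<dots> \<le> s * (4 * x * norm p2 + (3 + x^2) * (norm p1)^2)"
  proof (rule mult_left_mono[OF _ s])
    have "norm (4 * c * p2) = 4 * x * norm p2"
      by (simp add: norm_mult c_def x_def)
    moreover have "norm (of_real (3 + x^2) * p1^2) = (3 + x^2) * (norm p1)^2"
      unfolding norm_mult norm_power norm_of_real by simp
    ultimately show "norm (4 * c * p2 - of_real (3 + x^2) * p1^2) \<le> 4 * x * norm p2 + (3 + x^2) * (norm p1)^2"
      by (metis norm_triangle_ineq4)
  qed
  also have "\<dots> \<le> s * (4 * x * (1 - (norm p1)^2) + (3 + x^2) * (norm p1)^2)"
    using s x p2 by (intro mult_left_mono add_right_mono) auto
  also have "\<dots> \<le> 3"
    unfolding s_def using x p1 by (intro Carlson_polynomial_bound) (auto simp: power_le_one)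
  finally show ?thesis
    by (simp add: c_def x_def)
qed

lemma norm_le_2_if_one_plus_mult_nonzero:
  assumes hol: "p holomorphic_on ball 0 1"
    and deriv_bound: "\<And>z. z \<in> ball 0 1 \<Longrightarrow> norm (deriv p z) \<le> 1"
    and nonzero: "\<And>z. z \<in> ball 0 1 \<Longrightarrow> 1 + z * p z \<noteq> 0"
  shows "norm (p 0) \<le> 2"
proof (rule ccontr)
  assume "\<not> norm (p 0) \<le> 2"
  then have b: "norm (p 0) > 2" by simp
  define r where "r = 2 / norm (p 0)"
  have "2 * 2 \<le> norm (p 0) * norm (p 0)"
    using b by (intro mult_mono) auto
  with b have r: "0 < r" "r < 1" "r \<le> norm (p 0) / 2"
    by (auto simp: r_def divide_le_eq le_divide_eq divide_less_eq)
  have sub: "cball 0 r \<subseteq> ball (0::complex) 1"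
    using r by auto
  have lip: "norm (p z - p 0) \<le> norm z" if "z \<in> ball 0 1" for z
  proof -
    have "norm (p z - p 0) \<le> 1 * norm (z - 0)"
    proof (rule field_differentiable_bound[OF convex_ball])
      show "(p has_field_derivative deriv p w) (at w within ball 0 1)" if "w \<in> ball 0 1" for w
        using holomorphic_derivI[OF hol open_ball that] by (rule has_field_derivative_at_within)
    qed (use deriv_bound that in auto)
    then show ?thesis
      by simp
  qed
  have p_large: "norm (p z) \<ge> norm (p 0) / 2" if "z \<in> cball 0 r" for z
  proof -
    have "norm (p z - p 0) \<le> r"
      using lip[of z] sub that by auto
    moreover have "norm (p 0) - norm (p z) \<le> norm (p z - p 0)"
      using norm_triangle_ineq2[of "p 0" "p z"] by (simp add: norm_minus_commute)
    ultimately show ?thesis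
      using r(3) by linarith
  qed
  then have p_nonzero: "p z \<noteq> 0" if "z \<in> cball 0 r" for z
    using b that by force
  \<comment> \<open>A zero of \<open>1 + z p(z)\<close> is a fixed point of \<open>z \<mapsto> -1/p(z)\<close>, which maps \<open>cball 0 r\<close> into itself.\<close>
  have "continuous_on (cball 0 r) (\<lambda>z. - inverse (p z))"
    using holomorphic_on_imp_continuous_on[OF holomorphic_on_subset[OF hol sub]] p_nonzero
    by (intro continuous_on_minus continuous_on_inverse) auto
  moreover have "(\<lambda>z. - inverse (p z)) \<in> cball 0 r \<rightarrow> cball 0 r"
  proof
    fix z :: complex
    assume "z \<in> cball 0 r"
    then have "inverse (norm (p z)) \<le> inverse (norm (p 0) / 2)"
      using p_large b by (intro le_imp_inverse_le) auto
    then show "- inverse (p z) \<in> cball 0 r"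
      by (simp add: r_def norm_inverse)
  qed
  ultimately obtain z where z: "z \<in> cball 0 r" "- inverse (p z) = z"
    using brouwer_ball[OF r(1)] by blast
  then have "z * p z = - (inverse (p z) * p z)"
    by (metis minus_mult_left)
  with p_nonzero[OF z(1)] have "1 + z * p z = 0"
    by simp
  with nonzero z(1) sub show False
    by blast
qed

lemma has_field_derivative_reciprocal_form:
  assumes "(p has_field_derivative p') (at z)" "1 + z * p z \<noteq> 0"
  shows "((\<lambda>w. w / (1 + w * p w)) has_field_derivative (1 - z^2 * p') / (1 + z * p z)^2) (at z)"
  using assms by (auto intro!: derivative_eq_intros simp: field_simps power2_eq_square)

lemma class_U_expression_reciprocal_form:
  assumes "z \<noteq> 0" "w \<noteq> 0" "f z = z / w" "deriv f z = (1 - z^2 * d) / w^2"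
  shows "(z / f z)^2 * deriv f z - 1 = - (z^2 * d)"
  using assms by simp

lemma class_U_reciprocal_form:
  assumes "f \<in> class_U"
  obtains p where "p holomorphic_on ball 0 1" "\<And>z. z \<in> ball 0 1 \<Longrightarrow> 1 + z * p z \<noteq> 0"
    "\<And>z. z \<in> ball 0 1 \<Longrightarrow> f z = z / (1 + z * p z)" "deriv p \<in> schur_class"
proof -
  have hol: "f holomorphic_on ball 0 1" and f0: "f 0 = 0" and f'0: "deriv f 0 = 1"
    and nonzero: "\<And>z. z \<in> ball 0 1 \<Longrightarrow> z \<noteq> 0 \<Longrightarrow> f z \<noteq> 0"
    and U: "\<And>z. z \<in> ball 0 1 \<Longrightarrow> z \<noteq> 0 \<Longrightarrow> norm ((z / f z)^2 * deriv f z - 1) < 1"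
    using assms by (auto simp: class_U_def class_A_def)
  obtain q where holq: "q holomorphic_on ball 0 1" and fq: "\<And>z. norm z < 1 \<Longrightarrow> f z = z * q z"
      and q0: "deriv f 0 = q 0"
    using Schwarz3[OF hol f0] by blast
  have q_nonzero: "q z \<noteq> 0" if "z \<in> ball 0 1" for z
    using nonzero[OF that] fq[of z] that q0 f'0 by (cases "z = 0") auto
  have "(\<lambda>z. inverse (q z) - 1) holomorphic_on ball 0 1"
    using q_nonzero by (intro holomorphic_intros holq) auto
  moreover have "inverse (q 0) - 1 = 0"
    using q0 f'0 by simp
  ultimately obtain p where holp: "p holomorphic_on ball 0 1"
      and qp: "\<And>z. norm z < 1 \<Longrightarrow> inverse (q z) - 1 = z * p z"
    using Schwarz3 by blast
  have inverse_q: "1 + z * p z = inverse (q z)" if "z \<in> ball 0 1" for z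
    using qp[of z] that by (metis add.commute diff_eq_eq mem_ball_0)
  have p_nonzero: "1 + z * p z \<noteq> 0" if "z \<in> ball 0 1" for z
    using inverse_q[OF that] q_nonzero[OF that] by simp
  have f_eq: "f z = z / (1 + z * p z)" if "z \<in> ball 0 1" for z
    using fq[of z] inverse_q[OF that] that by (simp add: divide_inverse)
  have deriv_f: "deriv f z = (1 - z^2 * deriv p z) / (1 + z * p z)^2" if "z \<in> ball 0 1" for z
  proof -
    have "((\<lambda>w. w / (1 + w * p w)) has_field_derivative (1 - z^2 * deriv p z) / (1 + z * p z)^2) (at z)"
      by (rule has_field_derivative_reciprocal_form[OF holomorphic_derivI[OF holp open_ball that]
            p_nonzero[OF that]])
    then have "(f has_field_derivative (1 - z^2 * deriv p z) / (1 + z * p z)^2) (at z)"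
      by (rule has_field_derivative_transform_within_open[OF _ open_ball that]) (simp add: f_eq)
    then show ?thesis
      by (rule DERIV_imp_deriv)
  qed
  have "norm (z^2 * deriv p z) < 1" if "z \<in> ball 0 1" "z \<noteq> 0" for z
    using U[OF that] class_U_expression_reciprocal_form[OF that(2) p_nonzero[OF that(1)]
        f_eq[OF that(1)] deriv_f[OF that(1)]]
    by simp
  then have "deriv p \<in> schur_class"
    using holp by (intro schur_class_if_norm_square_mult_lt_1 holomorphic_deriv) auto
  with holp p_nonzero f_eq show ?thesis
    using that by blast
qed

lemma reciprocal_form_in_class_U:
  assumes holp: "p holomorphic_on ball 0 1"
    and nonzero: "\<And>z. z \<in> ball 0 1 \<Longrightarrow> 1 + z * p z \<noteq> 0"
    and bound: "\<And>z. z \<in> ball 0 1 \<Longrightarrow> z \<noteq> 0 \<Longrightarrow> norm (z^2 * deriv p z) < 1"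
  shows "(\<lambda>z. z / (1 + z * p z)) \<in> class_U"
proof -
  let ?f = "\<lambda>z. z / (1 + z * p z)"
  have deriv_f: "deriv ?f z = (1 - z^2 * deriv p z) / (1 + z * p z)^2" if "z \<in> ball 0 1" for z
    by (intro DERIV_imp_deriv has_field_derivative_reciprocal_form
        holomorphic_derivI[OF holp open_ball that] nonzero that)
  have "?f holomorphic_on ball 0 1"
    using nonzero by (intro holomorphic_intros holp) auto
  moreover have "?f z \<noteq> 0" "norm ((z / ?f z)^2 * deriv ?f z - 1) < 1"
    if "z \<in> ball 0 1" "z \<noteq> 0" for z
    using that nonzero[OF that(1)] bound[OF that]
      class_U_expression_reciprocal_form[OF that(2) nonzero[OF that(1)] _ deriv_f[OF that(1)]]
    by simp_all
  ultimately show ?thesis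
    using deriv_f[of 0] by (simp add: class_U_def class_A_def)
qed

lemma Hankel_reciprocal_form:
  assumes holp: "p holomorphic_on ball 0 1" and hP: "p has_fps_expansion P"
    and nonzero: "\<And>z. z \<in> ball 0 1 \<Longrightarrow> 1 + z * p z \<noteq> 0"
    and f_eq: "\<And>z. z \<in> ball 0 1 \<Longrightarrow> f z = z / (1 + z * p z)"
  shows "H22 f = fps_nth P 0 * fps_nth P 2 - (fps_nth P 1)^2"
    and "H31 f = fps_nth P 1 * fps_nth P 3 - (fps_nth P 2)^2"
proof -
  have "f holomorphic_on ball 0 1"
    using nonzero f_eq by (subst holomorphic_cong[OF refl f_eq]) (auto intro!: holomorphic_intros holp)
  then have hF: "f has_fps_expansion fps_expansion f 0"
    by (intro has_fps_expansion_fps_expansion) auto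
  have "fps_expansion f 0 * (1 + fps_X * P) = fps_X"
  proof (rule has_fps_expansion_unique_on[where S = "ball 0 1"])
    show "(\<lambda>z. f z * (1 + z * p z)) has_fps_expansion fps_expansion f 0 * (1 + fps_X * P)"
      by (intro has_fps_expansion_mult has_fps_expansion_add hF hP has_fps_expansion_1
          has_fps_expansion_fps_X)
    show "(\<lambda>z. z) has_fps_expansion fps_X"
      by (rule has_fps_expansion_fps_X)
    show "f z * (1 + z * p z) = z" if "z \<in> ball 0 1" for z
      using f_eq[OF that] nonzero[OF that] by simp
  qed auto
  note Hankel = fps_Hankel_X_divide[OF this]
  show "H22 f = fps_nth P 0 * fps_nth P 2 - (fps_nth P 1)^2"
    "H31 f = fps_nth P 1 * fps_nth P 3 - (fps_nth P 2)^2"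
    using Hankel by (simp_all add: H22_def H31_def coeff_eq_fps_nth[OF hF] numeral_eq_Suc)
qed

lemma class_U_Hankel_bounds:
  assumes "f \<in> class_U"
  shows "cmod (H22 f) \<le> 1" and "cmod (H31 f) \<le> 1/4"
proof -
  obtain p where holp: "p holomorphic_on ball 0 1"
    and nonzero: "\<And>z. z \<in> ball 0 1 \<Longrightarrow> 1 + z * p z \<noteq> 0"
    and f_eq: "\<And>z. z \<in> ball 0 1 \<Longrightarrow> f z = z / (1 + z * p z)"
    and schur: "deriv p \<in> schur_class"
    using class_U_reciprocal_form[OF assms] by blast
  define P where "P = fps_expansion p 0"
  define D where "D = fps_expansion (deriv p) 0"
  have hP: "p has_fps_expansion P"
    unfolding P_def using holp by (intro has_fps_expansion_fps_expansion) auto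
  have "D = fps_deriv P"
    unfolding D_def by (rule fps_expansion_eqI[OF has_fps_expansion_deriv[OF hP]])
  then have D: "fps_nth D 0 = fps_nth P 1" "fps_nth D 1 = 2 * fps_nth P 2" "fps_nth D 2 = 3 * fps_nth P 3"
    by (simp_all add: numeral_2_eq_2 numeral_3_eq_3)
  note Hankel = Hankel_reciprocal_form[OF holp hP nonzero f_eq]
  have H22: "H22 f = fps_nth P 0 * fps_nth D 1 / 2 - (fps_nth D 0)^2"
    using Hankel(1) D by simp
  have H31: "H31 f = (4 * fps_nth D 0 * fps_nth D 2 - 3 * (fps_nth D 1)^2) / 12"
    unfolding D using Hankel(2) by (simp add: power2_eq_square)
  have "norm (fps_nth P 0) \<le> 2"
    using norm_le_2_if_one_plus_mult_nonzero[OF holp schur_classD(2)[OF schur] nonzero]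
    by (simp add: P_def)
  moreover have "norm (fps_nth D 1) \<le> 1 - (norm (fps_nth D 0))^2"
    using schur_class_coeff_1_bound[OF schur] by (simp add: D_def)
  ultimately have "norm (fps_nth P 0) * norm (fps_nth D 1) / 2 + (norm (fps_nth D 0))^2 \<le> 1"
    using mult_right_mono[of "norm (fps_nth P 0)" 2 "norm (fps_nth D 1)"] by simp
  then show "cmod (H22 f) \<le> 1"
    unfolding H22 using norm_triangle_ineq4[of "fps_nth P 0 * fps_nth D 1 / 2" "(fps_nth D 0)^2"]
    by (simp add: norm_mult norm_divide norm_power)
  have "norm (4 * fps_nth D 0 * fps_nth D 2 - 3 * (fps_nth D 1)^2) \<le> 3"
    using schur_class_coeff_2_bound[OF schur] by (simp add: D_def)
  then show "cmod (H31 f) \<le> 1/4"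
    unfolding H31 by (simp add: norm_divide)
qed

lemma one_plus_monomial_nonzero:
  fixes c z :: complex
  assumes "norm c \<le> 1" "z \<in> ball 0 1"
  shows "1 + z * (c * z^m) \<noteq> 0"
proof
  assume "1 + z * (c * z^m) = 0"
  then have "norm c * norm z ^ Suc m = 1"
    by (metis add_eq_0_iff norm_minus_cancel norm_mult norm_one norm_power power_Suc mult.left_commute)
  moreover have "norm c * norm z ^ Suc m \<le> norm z ^ Suc m"
    using assms(1) by (intro mult_left_le_one_le) auto
  moreover have "norm z ^ Suc m < 1"
    using assms(2) by (metis mem_ball_0 norm_ge_zero power_less_one_iff zero_less_Suc)
  ultimately show False
    by simp
qed

lemma monomial_reciprocal_form_in_class_U:
  fixes c :: complex
  assumes m: "m \<ge> 1" and c: "real m * norm c \<le> 1"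
  shows "(\<lambda>z. z / (1 + z * (c * z^m))) \<in> class_U"
proof (rule reciprocal_form_in_class_U)
  have "norm c \<le> 1"
    using c m mult_right_mono[of 1 "real m" "norm c"] by simp
  then show "1 + z * (c * z^m) \<noteq> 0" if "z \<in> ball 0 1" for z
    using that by (rule one_plus_monomial_nonzero)
  show "norm (z^2 * deriv (\<lambda>z. c * z^m) z) < 1" if "z \<in> ball 0 1" "z \<noteq> 0" for z
  proof -
    have "deriv (\<lambda>z. c * z^m) z = c * (of_nat m * z^(m - 1))"
      by (intro DERIV_imp_deriv) (auto intro!: derivative_eq_intros)
    moreover have "z^2 * z^(m - 1) = z^Suc m"
      using m by (simp add: power_add[symmetric])
    ultimately have "norm (z^2 * deriv (\<lambda>z. c * z^m) z) = (real m * norm c) * norm z ^ Suc m"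
      by (simp add: norm_mult norm_power mult_ac)
    also have "\<dots> \<le> norm z ^ Suc m"
      using c by (intro mult_left_le_one_le) auto
    also have "\<dots> < 1"
      using that(1) by (metis mem_ball_0 norm_ge_zero power_less_one_iff zero_less_Suc)
    finally show ?thesis .
  qed
qed (intro holomorphic_intros)

lemma Hankel_monomial_reciprocal_form:
  fixes c :: complex
  assumes "norm c \<le> 1"
  shows "H22 (\<lambda>z. z / (1 + z * (c * z^m))) = (if m = 1 then - (c^2) else 0)"
    and "H31 (\<lambda>z. z / (1 + z * (c * z^m))) = (if m = 2 then - (c^2) else 0)"
proof -
  have "\<And>z. z \<in> ball 0 1 \<Longrightarrow> 1 + z * (c * z^m) \<noteq> 0"
    using assms by (rule one_plus_monomial_nonzero)
  note Hankel = Hankel_reciprocal_form[OF _ has_fps_expansion_cmult_left[OF has_fps_expansion_fps_X_power] this]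
  show "H22 (\<lambda>z. z / (1 + z * (c * z^m))) = (if m = 1 then - (c^2) else 0)"
    "H31 (\<lambda>z. z / (1 + z * (c * z^m))) = (if m = 2 then - (c^2) else 0)"
    by (subst Hankel; auto intro!: holomorphic_intros)+
qed

theorem theorem1:
  shows "(\<forall>f \<in> class_U. cmod (H22 f) \<le> 1 \<and> cmod (H31 f) \<le> 1/4)
       \<and> (\<exists>f \<in> class_U. cmod (H22 f) = 1)
       \<and> (\<exists>f \<in> class_U. cmod (H31 f) = 1/4)"
proof (intro conjI)
  show "\<forall>f \<in> class_U. cmod (H22 f) \<le> 1 \<and> cmod (H31 f) \<le> 1/4"
    using class_U_Hankel_bounds by blast
  let ?f2 = "\<lambda>z::complex. z / (1 + z * (1 * z^1))"
  let ?f3 = "\<lambda>z::complex. z / (1 + z * (1/2 * z^2))"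
  have "?f2 \<in> class_U" "?f3 \<in> class_U"
    by (rule monomial_reciprocal_form_in_class_U; simp)+
  moreover have "H22 ?f2 = -1" "H31 ?f3 = -1/4"
    by (subst Hankel_monomial_reciprocal_form; simp add: power2_eq_square)+
  ultimately show "\<exists>f \<in> class_U. cmod (H22 f) = 1" "\<exists>f \<in> class_U. cmod (H31 f) = 1/4"
    by force+
qed

end
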